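(* Let $K$ be a field of characteristic zero and let $A_2$ be either $K\langle x,y\rangle$ or $K[x,y]$. Let $r=x+w(x,y)$, where $w(x,y)$ belongs to the two-sided ideal of $A_2$ generated by $y$ and $w(x,y)\notin K[y]$. Let $\pi$ be the endomorphism of $A_2$ (a retraction onto $K[r]$) defined by $\pi(x)=x+w(x,y)$, $\pi(y)=0$, and let $f\in K[t]\setminus K$. Then $\pi$ does not preserve the automorphic orbit of $f(r)$; that is, there is an automorphism $\alpha$ of $A_2$ such that $\pi(\alpha(f(r)))\neq\beta(f(r))$ for every automorphism $\beta$ of $A_2$.
   Context: Endomorphisms and automorphisms are $K$-algebra ones. The automorphic orbit of an element $q$ is $\{\beta(q):\beta\in\mathrm{Aut}(A_2)\}$, and an endomorphism preserves it if it maps this set into itself. *)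

theory Defs
  imports "HOL-Library.Poly_Mapping" "HOL-Computational_Algebra.Polynomial"
begin

(* Polynomial-type algebras over K are modelled as finitely supported maps
   from monomials 'm to coefficients 'a, with convolution product.
   For the free algebra K<x,y> the monomials are words over {x,y}
   (concatenation monoid); for K[x,y] they are exponent vectors bool =>0 nat. *)

datatype fword = FW "bool list"

instantiation fword :: monoid_add
begin
definition zero_fword :: fword where "zero_fword = FW []"
fun plus_fword :: "fword \<Rightarrow> fword \<Rightarrow> fword" where
  "plus_fword (FW u) (FW v) = FW (u @ v)"
instance
proof
  fix a b c :: fword
  show "a + b + c = a + (b + c)" by (cases a; cases b; cases c) simp
  show "0 + a = a" by (cases a) (simp add: zero_fword_def)
  show "a + 0 = a" by (cases a) (simp add: zero_fword_def)
qed
end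

type_synonym 'a freealg = "fword \<Rightarrow>\<^sub>0 'a"
(* commutative polynomial algebra K[x,y]; False ~ x, True ~ y *)
type_synonym 'a polyalg = "(bool \<Rightarrow>\<^sub>0 nat) \<Rightarrow>\<^sub>0 'a"

definition X_free :: "'a::field freealg" where "X_free = Poly_Mapping.single (FW [False]) 1"
definition Y_free :: "'a::field freealg" where "Y_free = Poly_Mapping.single (FW [True]) 1"
definition X_comm :: "'a::field polyalg" where "X_comm = Poly_Mapping.single (Poly_Mapping.single False 1) 1"
definition Y_comm :: "'a::field polyalg" where "Y_comm = Poly_Mapping.single (Poly_Mapping.single True 1) 1"

definition kc :: "'a::field \<Rightarrow> ('m::monoid_add \<Rightarrow>\<^sub>0 'a)" where
  "kc c = Poly_Mapping.single 0 c"

definition kalg_endo :: "(('m::monoid_add \<Rightarrow>\<^sub>0 'a::field) \<Rightarrow> ('m \<Rightarrow>\<^sub>0 'a)) \<Rightarrow> bool" where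
  "kalg_endo \<phi> \<longleftrightarrow> (\<forall>a b. \<phi> (a + b) = \<phi> a + \<phi> b) \<and> (\<forall>a b. \<phi> (a * b) = \<phi> a * \<phi> b)
     \<and> \<phi> 1 = 1 \<and> (\<forall>c a. \<phi> (kc c * a) = kc c * \<phi> a)"

definition kalg_aut :: "(('m::monoid_add \<Rightarrow>\<^sub>0 'a::field) \<Rightarrow> ('m \<Rightarrow>\<^sub>0 'a)) \<Rightarrow> bool" where
  "kalg_aut \<phi> \<longleftrightarrow> kalg_endo \<phi> \<and> bij \<phi>"

definition aut_orbit :: "('m::monoid_add \<Rightarrow>\<^sub>0 'a::field) \<Rightarrow> ('m \<Rightarrow>\<^sub>0 'a) set" where
  "aut_orbit q = {\<beta> q | \<beta>. kalg_aut \<beta>}"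

definition peval :: "'a::field poly \<Rightarrow> ('m::monoid_add \<Rightarrow>\<^sub>0 'a) \<Rightarrow> ('m \<Rightarrow>\<^sub>0 'a)" where
  "peval f r = (\<Sum>i\<le>degree f. kc (coeff f i) * r ^ i)"

definition ideal2_gen :: "('m::monoid_add \<Rightarrow>\<^sub>0 'a::field) \<Rightarrow> ('m \<Rightarrow>\<^sub>0 'a) set" where
  "ideal2_gen y = {w. \<exists>ps. w = sum_list (map (\<lambda>(a, b). a * y * b) ps)}"

definition K_sub :: "('m::monoid_add \<Rightarrow>\<^sub>0 'a::field) \<Rightarrow> ('m \<Rightarrow>\<^sub>0 'a) set" where
  "K_sub y = {peval g y | g. True}"

definition orbit_claim :: "('m::monoid_add \<Rightarrow>\<^sub>0 'a::field) \<Rightarrow> ('m \<Rightarrow>\<^sub>0 'a) \<Rightarrow> bool" where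
  "orbit_claim x y \<longleftrightarrow>
    (\<forall>w \<pi> (f :: 'a poly).
       w \<in> ideal2_gen y \<longrightarrow> w \<notin> K_sub y \<longrightarrow>
       kalg_endo \<pi> \<longrightarrow> \<pi> x = x + w \<longrightarrow> \<pi> y = 0 \<longrightarrow>
       degree f > 0 \<longrightarrow>
       (\<exists>\<alpha>. kalg_aut \<alpha> \<and> \<pi> (\<alpha> (peval f (x + w))) \<notin> aut_orbit (peval f (x + w))))"

end

theory Submission
  imports Defs
begin

text \<open>
  Let \<open>\<epsilon> : A\<^sub>2 \<rightarrow> K[t]\<close> be the evaluation \<open>x \<mapsto> t, y \<mapsto> 0\<close>. Since \<open>\<pi>(y) = 0\<close>, \<open>\<pi>\<close> factors as
  \<open>\<pi>(g) = \<epsilon>(g)(r)\<close>. Take the automorphism \<open>\<alpha> : x \<mapsto> y + x\<^sup>k, y \<mapsto> x\<close> with \<open>k \<ge> 2\<close> larger than every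
  \<open>y\<close>-degree occurring in \<open>w\<close>. Then \<open>\<epsilon> \<circ> \<alpha>\<close> sends a monomial with \<open>a\<close> letters \<open>x\<close> and \<open>b\<close>
  letters \<open>y\<close> to \<open>t^(k a + b)\<close>, so \<open>p = \<epsilon>(\<alpha>(r)) = t\<^sup>k + \<dots>\<close> has degree at least \<open>k\<close>, and
  \<open>\<pi>(\<alpha>(f(r))) = f(p(r))\<close>. If this were \<open>\<beta>(f(r))\<close>, applying \<open>inv \<beta>\<close> and then \<open>\<epsilon>\<close> would give
  \<open>f = f \<circ> p \<circ> q\<close> with \<open>q = \<epsilon>(inv \<beta> r)\<close>, forcing \<open>deg p = 1\<close>.
\<close>

section \<open>Evaluation of finitely supported maps\<close>

definition pm_eval :: "('a::zero \<Rightarrow> 'r::semiring_1) \<Rightarrow> ('m \<Rightarrow> 'r) \<Rightarrow> ('m \<Rightarrow>\<^sub>0 'a) \<Rightarrow> 'r" where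
  "pm_eval e mo g = (\<Sum>\<mu>\<in>Poly_Mapping.keys g. e (Poly_Mapping.lookup g \<mu>) * mo \<mu>)"

lemma poly_mapping_sum_single_lookup:
  "g = (\<Sum>\<mu>\<in>Poly_Mapping.keys g. Poly_Mapping.single \<mu> (Poly_Mapping.lookup g \<mu>))"
proof -
  have *: "finite I \<Longrightarrow> Poly_Mapping.lookup (\<Sum>i\<in>I. Poly_Mapping.single i (Poly_Mapping.lookup g i)) j =
            (if j \<in> I then Poly_Mapping.lookup g j else 0)" for I j
    by (induction I rule: finite_induct) (auto simp: lookup_single lookup_add when_def)
  show ?thesis
    by (rule poly_mapping_eqI) (simp add: * in_keys_iff)
qed

lemma poly_mapping_induct_single:
  fixes g :: "'m \<Rightarrow>\<^sub>0 'a::comm_monoid_add"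
  assumes single: "\<And>\<mu> c. P (Poly_Mapping.single \<mu> c)"
    and add: "\<And>a b. P a \<Longrightarrow> P b \<Longrightarrow> P (a + b)"
  shows "P g"
proof -
  have "P (\<Sum>\<mu>\<in>I. Poly_Mapping.single \<mu> (Poly_Mapping.lookup g \<mu>))" for I
    by (induction I rule: infinite_finite_induct) (use single[of _ 0] in \<open>simp_all add: add single\<close>)
  from this[of "Poly_Mapping.keys g"] show ?thesis
    by (simp only: poly_mapping_sum_single_lookup[of g, symmetric])
qed

lemma pm_eval_superset:
  assumes "finite S" "Poly_Mapping.keys g \<subseteq> S" "e 0 = 0"
  shows "pm_eval e mo g = (\<Sum>\<mu>\<in>S. e (Poly_Mapping.lookup g \<mu>) * mo \<mu>)"
  unfolding pm_eval_def
  by (rule sum.mono_neutral_left) (use assms in \<open>auto simp: in_keys_iff\<close>)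

lemma pm_eval_0 [simp]: "pm_eval e mo 0 = 0"
  by (simp add: pm_eval_def)

lemma pm_eval_single:
  assumes "e 0 = 0"
  shows "pm_eval e mo (Poly_Mapping.single \<mu> c) = e c * mo \<mu>"
  using pm_eval_superset[of "{\<mu>}" "Poly_Mapping.single \<mu> c" e mo] assms by auto

lemma pm_eval_add:
  fixes e :: "'a::monoid_add \<Rightarrow> 'r::semiring_1"
  assumes "\<And>a b. e (a + b) = e a + e b" "e 0 = 0"
  shows "pm_eval e mo (g + h) = pm_eval e mo g + pm_eval e mo h"
proof -
  let ?S = "Poly_Mapping.keys g \<union> Poly_Mapping.keys h"
  have S: "finite ?S" by simp
  have "pm_eval e mo (g + h) = (\<Sum>\<mu>\<in>?S. e (Poly_Mapping.lookup (g + h) \<mu>) * mo \<mu>)"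
    by (rule pm_eval_superset) (use assms keys_add[of g h] in auto)
  also have "\<dots> = (\<Sum>\<mu>\<in>?S. e (Poly_Mapping.lookup g \<mu>) * mo \<mu>) + (\<Sum>\<mu>\<in>?S. e (Poly_Mapping.lookup h \<mu>) * mo \<mu>)"
    by (simp add: lookup_add assms distrib_right sum.distrib)
  also have "\<dots> = pm_eval e mo g + pm_eval e mo h"
    using pm_eval_superset[OF S, of g e mo] pm_eval_superset[OF S, of h e mo] assms by auto
  finally show ?thesis .
qed

lemma pm_eval_sum:
  fixes e :: "'a::comm_monoid_add \<Rightarrow> 'r::semiring_1"
  assumes "\<And>a b. e (a + b) = e a + e b" "e 0 = 0"
  shows "pm_eval e mo (\<Sum>i\<in>I. F i) = (\<Sum>i\<in>I. pm_eval e mo (F i))"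
  by (induction I rule: infinite_finite_induct) (simp_all add: pm_eval_add[OF assms])

text \<open>Multiplicativity needs the coefficients to commute with the images of monomials, since
  the product of \<open>'m \<Rightarrow>\<^sub>0 'a\<close> treats coefficients as central.\<close>

lemma pm_eval_mult:
  fixes e :: "'a::semiring_1 \<Rightarrow> 'r::semiring_1" and mo :: "'m::monoid_add \<Rightarrow> 'r"
  assumes add: "\<And>a b. e (a + b) = e a + e b" and e0: "e 0 = 0"
    and mult: "\<And>a b. e (a * b) = e a * e b"
    and mo_add: "\<And>\<mu> \<nu>. mo (\<mu> + \<nu>) = mo \<mu> * mo \<nu>"
    and central: "\<And>c \<mu>. e c * mo \<mu> = mo \<mu> * e c"
  shows "pm_eval e mo (g * h) = pm_eval e mo g * pm_eval e mo h"
proof -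
  let ?A = "Poly_Mapping.keys g" and ?B = "Poly_Mapping.keys h"
  let ?g = "Poly_Mapping.lookup g" and ?h = "Poly_Mapping.lookup h"
  have "g * h = (\<Sum>\<mu>\<in>?A. Poly_Mapping.single \<mu> (?g \<mu>)) * (\<Sum>\<nu>\<in>?B. Poly_Mapping.single \<nu> (?h \<nu>))"
    using poly_mapping_sum_single_lookup[of g] poly_mapping_sum_single_lookup[of h] by simp
  also have "\<dots> = (\<Sum>\<mu>\<in>?A. \<Sum>\<nu>\<in>?B. Poly_Mapping.single (\<mu> + \<nu>) (?g \<mu> * ?h \<nu>))"
    by (simp add: sum_product mult_single)
  finally have "pm_eval e mo (g * h) = (\<Sum>\<mu>\<in>?A. \<Sum>\<nu>\<in>?B. e (?g \<mu> * ?h \<nu>) * mo (\<mu> + \<nu>))"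
    by (simp add: pm_eval_sum[OF add e0] pm_eval_single[where e = e, OF e0])
  also have "\<dots> = (\<Sum>\<mu>\<in>?A. \<Sum>\<nu>\<in>?B. (e (?g \<mu>) * mo \<mu>) * (e (?h \<nu>) * mo \<nu>))"
  proof (intro sum.cong refl)
    fix \<mu> \<nu>
    have "e (?g \<mu>) * (mo \<mu> * e (?h \<nu>)) * mo \<nu> = e (?g \<mu>) * (e (?h \<nu>) * mo \<mu>) * mo \<nu>"
      by (simp add: central)
    then show "e (?g \<mu> * ?h \<nu>) * mo (\<mu> + \<nu>) = (e (?g \<mu>) * mo \<mu>) * (e (?h \<nu>) * mo \<nu>)"
      by (simp add: mult mo_add mult.assoc)
  qed
  also have "\<dots> = pm_eval e mo g * pm_eval e mo h"
    by (simp add: pm_eval_def sum_product)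
  finally show ?thesis .
qed

lemma kc_0 [simp]: "kc 0 = 0"
  by (simp add: kc_def)

lemma kc_1 [simp]: "kc 1 = 1"
  by (simp add: kc_def)

lemma kc_add: "kc (a + b) = kc a + kc b"
  by (simp add: kc_def single_add)

lemma kc_mult: "kc (a * b) = (kc a * kc b :: 'm::monoid_add \<Rightarrow>\<^sub>0 'a::field)"
  by (simp add: kc_def mult_single)

lemma kc_commute: "kc c * g = g * (kc c :: 'm::monoid_add \<Rightarrow>\<^sub>0 'a::field)"
proof -
  let ?expand = "\<lambda>g. \<Sum>\<mu>\<in>Poly_Mapping.keys g. Poly_Mapping.single \<mu> (Poly_Mapping.lookup g \<mu>)"
  have "kc c * ?expand g = ?expand g * kc c"
    by (simp add: sum_distrib_left sum_distrib_right kc_def mult_single mult.commute)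
  then show ?thesis
    by (simp only: poly_mapping_sum_single_lookup[symmetric])
qed

lemma kc_left_commute: "kc c * (g * h) = g * (kc c * h :: 'm::monoid_add \<Rightarrow>\<^sub>0 'a::field)"
  by (metis mult.assoc kc_commute)

lemma kalg_endo_pm_eval_kc:
  fixes mo :: "'m::monoid_add \<Rightarrow> ('m \<Rightarrow>\<^sub>0 'a::field)"
  assumes mo_add: "\<And>\<mu> \<nu>. mo (\<mu> + \<nu>) = mo \<mu> * mo \<nu>" and mo_0: "mo 0 = 1"
  shows "kalg_endo (pm_eval kc mo)"
proof -
  have add: "pm_eval kc mo (a + b) = pm_eval kc mo a + pm_eval kc mo b" for a b
    by (rule pm_eval_add) (simp_all add: kc_add)
  have mult: "pm_eval kc mo (a * b) = pm_eval kc mo a * pm_eval kc mo b" for a b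
    by (rule pm_eval_mult[OF kc_add kc_0 kc_mult mo_add kc_commute])
  have scalar: "pm_eval kc mo (kc c) = kc c" for c
  proof -
    have "pm_eval kc mo (Poly_Mapping.single 0 c) = kc c * mo 0"
      by (rule pm_eval_single) simp
    then show ?thesis
      by (simp add: mo_0 kc_def)
  qed
  show ?thesis
    unfolding kalg_endo_def using scalar[of 1] by (simp add: add mult scalar)
qed

context
  fixes \<phi> :: "('m::monoid_add \<Rightarrow>\<^sub>0 'a::field) \<Rightarrow> ('m \<Rightarrow>\<^sub>0 'a)"
  assumes endo: "kalg_endo \<phi>"
begin

lemma endo_add: "\<phi> (a + b) = \<phi> a + \<phi> b"
  using endo by (simp add: kalg_endo_def)

lemma endo_mult: "\<phi> (a * b) = \<phi> a * \<phi> b"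
  using endo by (simp add: kalg_endo_def)

lemma endo_one: "\<phi> 1 = 1"
  using endo by (simp add: kalg_endo_def)

lemma endo_zero: "\<phi> 0 = 0"
  using endo_add[of 0 0] by simp

lemma endo_kc: "\<phi> (kc c) = kc c"
  using endo endo_one unfolding kalg_endo_def by (metis mult.right_neutral)

lemma endo_diff: "\<phi> (a - b) = \<phi> a - \<phi> b"
  using endo_add[of "a - b" b] by (simp add: eq_diff_eq)

lemma endo_power: "\<phi> (a ^ n) = \<phi> a ^ n"
  by (induction n) (simp_all add: endo_one endo_mult)

lemma endo_sum: "\<phi> (\<Sum>i\<in>I. F i) = (\<Sum>i\<in>I. \<phi> (F i))"
  by (induction I rule: infinite_finite_induct) (simp_all add: endo_zero endo_add)

lemma endo_peval: "\<phi> (peval f g) = peval f (\<phi> g)"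
  unfolding peval_def by (simp add: endo_sum endo_mult endo_kc endo_power)

end

lemma kalg_aut_inv_endo:
  assumes "kalg_aut \<beta>"
  shows "kalg_endo (inv \<beta>)"
proof -
  have endo: "kalg_endo \<beta>" and "bij \<beta>"
    using assms by (auto simp: kalg_aut_def)
  then have inj: "inj \<beta>" and surj: "\<beta> (inv \<beta> a) = a" for a
    by (auto simp: bij_is_inj bij_is_surj surj_f_inv_f)
  show ?thesis unfolding kalg_endo_def
    by (intro conjI allI; rule injD[OF inj])
       (simp_all add: surj endo_add[OF endo] endo_mult[OF endo] endo_one[OF endo] endo_kc[OF endo])
qed

lemma peval_upto:
  assumes "degree f \<le> N"
  shows "peval f g = (\<Sum>i\<le>N. kc (coeff f i) * g ^ i)"
  unfolding peval_def
  by (rule sum.mono_neutral_left) (use assms in \<open>auto simp: coeff_eq_0\<close>)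

lemma peval_0 [simp]: "peval 0 g = 0"
  by (simp add: peval_def)

lemma peval_add: "peval (p + q) g = peval p g + peval q g"
proof -
  let ?N = "max (degree p) (degree q)"
  have "degree (p + q) \<le> ?N"
    by (rule degree_add_le) auto
  then show ?thesis
    using peval_upto[of p ?N g] peval_upto[of q ?N g] peval_upto[of "p + q" ?N g]
    by (simp add: kc_add distrib_right sum.distrib)
qed

lemma peval_pCons: "peval (pCons a p) g = kc a + g * peval p (g :: 'm::monoid_add \<Rightarrow>\<^sub>0 'a::field)"
proof -
  have "peval (pCons a p) g = (\<Sum>i\<le>Suc (degree p). kc (coeff (pCons a p) i) * g ^ i)"
    by (rule peval_upto) (rule degree_pCons_le)
  also have "\<dots> = kc a + (\<Sum>i\<le>degree p. kc (coeff p i) * g ^ Suc i)"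
    unfolding sum.atMost_Suc_shift by simp
  also have "\<dots> = kc a + g * peval p g"
    unfolding peval_def sum_distrib_left by (simp add: kc_left_commute)
  finally show ?thesis .
qed

lemma peval_const: "peval [:c:] g = kc c"
  by (simp add: peval_pCons)

lemma peval_pX: "peval [:0, 1:] g = g"
  by (simp add: peval_pCons)

lemma peval_smult: "peval (smult c p) g = kc c * peval p (g :: 'm::monoid_add \<Rightarrow>\<^sub>0 'a::field)"
  by (induction p) (simp_all add: peval_pCons kc_mult distrib_left kc_left_commute)

lemma peval_mult: "peval (p * q) g = peval p g * peval q (g :: 'm::monoid_add \<Rightarrow>\<^sub>0 'a::field)"
proof (induction p)
  case 0
  then show ?case by simp
next
  case (pCons a p)
  have "peval (pCons a p * q) g = peval (smult a q + pCons 0 (p * q)) g"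
    by simp
  also have "\<dots> = kc a * peval q g + g * (peval p g * peval q g)"
    by (simp add: peval_add peval_smult peval_pCons pCons)
  also have "\<dots> = peval (pCons a p) g * peval q g"
    by (simp add: peval_pCons distrib_right mult.assoc)
  finally show ?case .
qed

lemma pm_eval_poly_add:
  "pm_eval (\<lambda>c. [:c:]) mo (g + h) = pm_eval (\<lambda>c. [:c:]) mo g + pm_eval (\<lambda>c. [:c:]) mo (h :: 'm \<Rightarrow>\<^sub>0 'a::field)"
  by (rule pm_eval_add) simp_all

lemma pm_eval_poly_mult:
  fixes mo :: "'m::monoid_add \<Rightarrow> 'a::field poly"
  assumes "\<And>\<mu> \<nu>. mo (\<mu> + \<nu>) = mo \<mu> * mo \<nu>"
  shows "pm_eval (\<lambda>c. [:c:]) mo (g * h) = pm_eval (\<lambda>c. [:c:]) mo g * pm_eval (\<lambda>c. [:c:]) mo h"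
  by (rule pm_eval_mult) (simp_all add: assms mult.commute)

lemma pm_eval_poly_kc:
  "pm_eval (\<lambda>c. [:c:]) mo (kc c :: 'm::monoid_add \<Rightarrow>\<^sub>0 'a::field) = [:c:] * mo 0"
  unfolding kc_def by (rule pm_eval_single) simp

section \<open>Algebras generated by two letters\<close>

locale two_generator_algebra =
  fixes X Y :: "'m::monoid_add \<Rightarrow>\<^sub>0 'a::field"
    and mx my :: 'm and degx degy :: "'m \<Rightarrow> nat"
    and subst :: "('m \<Rightarrow>\<^sub>0 'a) \<Rightarrow> ('m \<Rightarrow>\<^sub>0 'a) \<Rightarrow> ('m \<Rightarrow>\<^sub>0 'a) \<Rightarrow> ('m \<Rightarrow>\<^sub>0 'a)"
  assumes X_eq: "X = Poly_Mapping.single mx 1" and Y_eq: "Y = Poly_Mapping.single my 1"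
    and degx_add: "\<And>\<mu> \<nu>. degx (\<mu> + \<nu>) = degx \<mu> + degx \<nu>"
    and degy_add: "\<And>\<mu> \<nu>. degy (\<mu> + \<nu>) = degy \<mu> + degy \<nu>"
    and degx_mx: "degx mx = 1" and degy_mx: "degy mx = 0"
    and degx_my: "degx my = 0" and degy_my: "degy my = 1"
    and generated: "\<And>P g. (\<And>c. P (kc c)) \<Longrightarrow> P X \<Longrightarrow> P Y \<Longrightarrow> (\<And>a b. P a \<Longrightarrow> P b \<Longrightarrow> P (a + b))
       \<Longrightarrow> (\<And>a b. P a \<Longrightarrow> P b \<Longrightarrow> P (a * b)) \<Longrightarrow> P g"
    and kalg_endo_subst: "\<And>sx sy. kalg_endo (subst sx sy)"
    and subst_X: "\<And>sx sy. subst sx sy X = sx" and subst_Y: "\<And>sx sy. subst sx sy Y = sy"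
begin

lemma degx_0: "degx 0 = 0"
  using degx_add[of 0 0] by simp

lemma degy_0: "degy 0 = 0"
  using degy_add[of 0 0] by simp

lemma hom_ext:
  fixes F G :: "('m \<Rightarrow>\<^sub>0 'a) \<Rightarrow> 'r::ring_1"
  assumes "\<And>a b. F (a + b) = F a + F b" "\<And>a b. F (a * b) = F a * F b"
    and "\<And>a b. G (a + b) = G a + G b" "\<And>a b. G (a * b) = G a * G b"
    and "\<And>c. F (kc c) = G (kc c)" "F X = G X" "F Y = G Y"
  shows "F g = G g"
  by (rule generated[of "\<lambda>g. F g = G g"]) (simp_all add: assms)

definition eval_y0 :: "('m \<Rightarrow>\<^sub>0 'a) \<Rightarrow> 'a poly" where
  "eval_y0 = pm_eval (\<lambda>c. [:c:]) (\<lambda>\<mu>. if degy \<mu> = 0 then monom 1 (degx \<mu>) else 0)"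

definition eval_weighted :: "nat \<Rightarrow> ('m \<Rightarrow>\<^sub>0 'a) \<Rightarrow> 'a poly" where
  "eval_weighted k = pm_eval (\<lambda>c. [:c:]) (\<lambda>\<mu>. monom 1 (k * degx \<mu> + degy \<mu>))"

lemma eval_y0_add: "eval_y0 (a + b) = eval_y0 a + eval_y0 b"
  unfolding eval_y0_def by (rule pm_eval_poly_add)

lemma eval_y0_mult: "eval_y0 (a * b) = eval_y0 a * eval_y0 b"
  unfolding eval_y0_def by (rule pm_eval_poly_mult) (simp add: degx_add degy_add mult_monom)

lemma eval_y0_kc: "eval_y0 (kc c) = [:c:]"
  unfolding eval_y0_def by (simp add: pm_eval_poly_kc degx_0 degy_0)

lemma eval_y0_X: "eval_y0 X = [:0, 1:]"
  unfolding eval_y0_def X_eq by (simp add: pm_eval_single degx_mx degy_mx monom_altdef)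

lemma eval_y0_Y: "eval_y0 Y = 0"
  unfolding eval_y0_def Y_eq by (simp add: pm_eval_single degy_my)

lemma eval_y0_0: "eval_y0 0 = 0"
  by (simp add: eval_y0_def)

lemma eval_y0_power: "eval_y0 (a ^ n) = eval_y0 a ^ n"
  by (induction n) (simp_all add: eval_y0_mult eval_y0_kc[of 1, simplified])

lemma eval_y0_peval: "eval_y0 (peval f h) = f \<circ>\<^sub>p eval_y0 h"
  by (induction f)
     (simp_all add: peval_pCons eval_y0_add eval_y0_mult eval_y0_kc pcompose_pCons eval_y0_0)

lemma eval_weighted_add: "eval_weighted k (a + b) = eval_weighted k a + eval_weighted k b"
  unfolding eval_weighted_def by (rule pm_eval_poly_add)

lemma eval_weighted_mult: "eval_weighted k (a * b) = eval_weighted k a * eval_weighted k b"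
  unfolding eval_weighted_def
  by (rule pm_eval_poly_mult) (simp add: degx_add degy_add mult_monom algebra_simps)

lemma eval_weighted_kc: "eval_weighted k (kc c) = [:c:]"
  unfolding eval_weighted_def by (simp add: pm_eval_poly_kc degx_0 degy_0)

lemma eval_weighted_X: "eval_weighted k X = monom 1 k"
  unfolding eval_weighted_def X_eq by (simp add: pm_eval_single degx_mx degy_mx)

lemma eval_weighted_Y: "eval_weighted k Y = monom 1 1"
  unfolding eval_weighted_def Y_eq by (simp add: pm_eval_single degx_my degy_my)

lemma retraction_eq_peval_eval_y0:
  assumes endo: "kalg_endo \<pi>" and "\<pi> Y = 0"
  shows "\<pi> g = peval (eval_y0 g) (\<pi> X)"
  by (rule hom_ext[where F = \<pi> and G = "\<lambda>g. peval (eval_y0 g) (\<pi> X)"])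
     (simp_all add: assms endo_add[OF endo] endo_mult[OF endo] endo_kc[OF endo]
       eval_y0_add eval_y0_mult eval_y0_kc eval_y0_X eval_y0_Y peval_add peval_mult peval_const peval_pX)

lemma kalg_aut_subst_triangular: "kalg_aut (subst (Y + X ^ k) X)"
proof -
  define \<alpha> where "\<alpha> = subst (Y + X ^ k) X"
  define \<alpha>' where "\<alpha>' = subst Y (X - Y ^ k)"
  have endo: "kalg_endo \<alpha>" "kalg_endo \<alpha>'"
    unfolding \<alpha>_def \<alpha>'_def by (rule kalg_endo_subst)+
  have gens: "\<alpha> X = Y + X ^ k" "\<alpha> Y = X" "\<alpha>' X = Y" "\<alpha>' Y = X - Y ^ k"
    by (simp_all add: \<alpha>_def \<alpha>'_def subst_X subst_Y)
  note hom = endo_add[OF endo(1)] endo_add[OF endo(2)] endo_mult[OF endo(1)] endo_mult[OF endo(2)]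
    endo_kc[OF endo(1)] endo_kc[OF endo(2)] endo_diff[OF endo(1)]
    endo_power[OF endo(1)] endo_power[OF endo(2)]
  have "\<alpha> (\<alpha>' g) = g" for g
    by (rule hom_ext[where F = "\<lambda>g. \<alpha> (\<alpha>' g)" and G = "\<lambda>g. g"]) (simp_all add: hom gens)
  moreover have "\<alpha>' (\<alpha> g) = g" for g
    by (rule hom_ext[where F = "\<lambda>g. \<alpha>' (\<alpha> g)" and G = "\<lambda>g. g"]) (simp_all add: hom gens)
  ultimately have "bij \<alpha>"
    by (intro o_bij[where g = \<alpha>']) auto
  with endo(1) show ?thesis
    by (simp add: kalg_aut_def \<alpha>_def)
qed

lemma eval_y0_subst_triangular: "eval_y0 (subst (Y + X ^ k) X g) = eval_weighted k g"
proof -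
  have endo: "kalg_endo (subst (Y + X ^ k) X)"
    by (rule kalg_endo_subst)
  show ?thesis
    by (rule hom_ext[where F = "\<lambda>g. eval_y0 (subst (Y + X ^ k) X g)" and G = "eval_weighted k"])
       (simp_all add: endo_add[OF endo] endo_mult[OF endo] endo_kc[OF endo] subst_X subst_Y
         eval_y0_add eval_y0_mult eval_y0_kc eval_y0_X eval_y0_Y eval_y0_power
         eval_weighted_add eval_weighted_mult eval_weighted_kc eval_weighted_X eval_weighted_Y
         monom_altdef)
qed

lemma degy_ge_1_if_in_keys_ideal:
  assumes "w \<in> ideal2_gen Y" "\<mu> \<in> Poly_Mapping.keys w"
  shows "1 \<le> degy \<mu>"
proof -
  have keys_Y: "Poly_Mapping.keys Y = {my}"
    by (simp add: Y_eq)
  have Y_factor: "1 \<le> degy \<mu>" if \<mu>: "\<mu> \<in> Poly_Mapping.keys (a * Y * b)" for a b \<mu>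
  proof -
    obtain s t v where "\<mu> = s + t + v" "t \<in> Poly_Mapping.keys Y"
      using \<mu> keys_mult[of "a * Y" b] keys_mult[of a Y] by blast
    then show ?thesis
      by (simp add: keys_Y degy_add degy_my)
  qed
  obtain ps where "w = sum_list (map (\<lambda>(a, b). a * Y * b) ps)"
    using assms(1) by (auto simp: ideal2_gen_def)
  with assms(2) show ?thesis
  proof (induction ps arbitrary: w)
    case (Cons p ps)
    then show ?case
      using keys_add Y_factor by (cases p) fastforce
  qed simp
qed

lemma eval_y0_ideal:
  assumes "w \<in> ideal2_gen Y"
  shows "eval_y0 w = 0"
proof -
  have nonzero: "degy \<mu> \<noteq> 0" if "\<mu> \<in> Poly_Mapping.keys w" for \<mu>
    using degy_ge_1_if_in_keys_ideal[OF assms that] by simp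
  show ?thesis
    unfolding eval_y0_def pm_eval_def by (intro sum.neutral ballI) (simp add: nonzero)
qed

text \<open>A monomial with \<open>a\<close> letters \<open>x\<close> and \<open>0 < b < k\<close> letters \<open>y\<close> has weight \<open>k a + b \<noteq> k\<close>.\<close>

lemma coeff_eval_weighted_ideal:
  assumes "w \<in> ideal2_gen Y" and "\<And>\<mu>. \<mu> \<in> Poly_Mapping.keys w \<Longrightarrow> degy \<mu> < k"
  shows "coeff (eval_weighted k w) k = 0"
proof -
  have "coeff (eval_weighted k w) k =
      (\<Sum>\<mu>\<in>Poly_Mapping.keys w. coeff (monom (Poly_Mapping.lookup w \<mu>) (k * degx \<mu> + degy \<mu>)) k)"
    unfolding eval_weighted_def pm_eval_def by (simp add: coeff_sum smult_monom)
  also have "\<dots> = 0"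
  proof (intro sum.neutral ballI)
    fix \<mu> assume \<mu>: "\<mu> \<in> Poly_Mapping.keys w"
    have "1 \<le> degy \<mu>" "degy \<mu> < k"
      using degy_ge_1_if_in_keys_ideal[OF assms(1) \<mu>] assms(2)[OF \<mu>] .
    then have "k * degx \<mu> + degy \<mu> \<noteq> k"
      by (cases "degx \<mu>") auto
    then show "coeff (monom (Poly_Mapping.lookup w \<mu>) (k * degx \<mu> + degy \<mu>)) k = 0"
      by (simp add: coeff_monom)
  qed
  finally show ?thesis .
qed

lemma degree_eval_y0_subst_triangular:
  assumes "w \<in> ideal2_gen Y" and "\<And>\<mu>. \<mu> \<in> Poly_Mapping.keys w \<Longrightarrow> degy \<mu> < k"
  shows "k \<le> degree (eval_y0 (subst (Y + X ^ k) X (X + w)))"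
proof (rule le_degree)
  have "eval_y0 (subst (Y + X ^ k) X (X + w)) = monom 1 k + eval_weighted k w"
    by (simp add: eval_y0_subst_triangular eval_weighted_add eval_weighted_X)
  then show "coeff (eval_y0 (subst (Y + X ^ k) X (X + w))) k \<noteq> 0"
    by (simp add: coeff_eval_weighted_ideal[OF assms])
qed

lemma degree_eq_1_if_peval_pcompose_in_aut_orbit:
  assumes orbit: "peval f (peval p r) \<in> aut_orbit (peval f r)"
    and r: "eval_y0 r = [:0, 1:]" and f: "0 < degree f"
  shows "degree p = 1"
proof -
  obtain \<beta> where aut: "kalg_aut \<beta>" and eq: "peval f (peval p r) = \<beta> (peval f r)"
    using orbit unfolding aut_orbit_def by auto
  define \<gamma> where "\<gamma> = inv \<beta>"
  have endo: "kalg_endo \<gamma>"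
    unfolding \<gamma>_def by (rule kalg_aut_inv_endo[OF aut])
  have "\<gamma> (\<beta> a) = a" for a
    using aut by (simp add: \<gamma>_def kalg_aut_def bij_is_inj)
  then have "peval f r = \<gamma> (peval f (peval p r))"
    by (simp add: eq)
  also have "\<dots> = peval f (peval p (\<gamma> r))"
    by (simp add: endo_peval[OF endo])
  finally have "f = f \<circ>\<^sub>p (p \<circ>\<^sub>p eval_y0 (\<gamma> r))"
    by (metis eval_y0_peval r pcompose_idR)
  then have "degree f = degree f * (degree p * degree (eval_y0 (\<gamma> r)))"
    by (metis degree_pcompose)
  with f show ?thesis
    by simp
qed

theorem orbit_claim: "orbit_claim X Y"
  unfolding orbit_claim_def
proof (intro allI impI)
  fix w \<pi> and f :: "'a poly"
  assume w: "w \<in> ideal2_gen Y" and endo: "kalg_endo \<pi>"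
    and \<pi>X: "\<pi> X = X + w" and \<pi>Y: "\<pi> Y = 0" and f: "0 < degree f"
  define r where "r = X + w"
  define k where "k = Max (insert 0 (degy ` Poly_Mapping.keys w)) + 2"
  have k: "degy \<mu> < k" if "\<mu> \<in> Poly_Mapping.keys w" for \<mu>
  proof -
    have "degy \<mu> \<le> Max (insert 0 (degy ` Poly_Mapping.keys w))"
      using that by (intro Max_ge) auto
    then show ?thesis
      by (simp add: k_def)
  qed
  define \<alpha> where "\<alpha> = subst (Y + X ^ k) X"
  define p where "p = eval_y0 (\<alpha> r)"
  have "\<pi> (\<alpha> (peval f r)) = peval f (peval p r)"
    using retraction_eq_peval_eval_y0[OF endo \<pi>Y, of "\<alpha> r"]
    by (simp add: \<alpha>_def endo_peval[OF endo] endo_peval[OF kalg_endo_subst] \<pi>X p_def r_def)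
  moreover have "degree p \<noteq> 1"
    using degree_eval_y0_subst_triangular[OF w k] by (simp add: p_def \<alpha>_def r_def k_def)
  moreover have "eval_y0 r = [:0, 1:]"
    by (simp add: r_def eval_y0_add eval_y0_X eval_y0_ideal[OF w])
  ultimately have "\<pi> (\<alpha> (peval f r)) \<notin> aut_orbit (peval f r)"
    using degree_eq_1_if_peval_pcompose_in_aut_orbit f by metis
  then show "\<exists>\<alpha>. kalg_aut \<alpha> \<and> \<pi> (\<alpha> (peval f (X + w))) \<notin> aut_orbit (peval f (X + w))"
    using kalg_aut_subst_triangular by (auto simp: \<alpha>_def r_def)
qed

end

section \<open>The free algebra \<open>K\<langle>x,y\<rangle>\<close>\<close>

fun x_count :: "fword \<Rightarrow> nat" where
  "x_count (FW l) = length (filter Not l)"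

fun y_count :: "fword \<Rightarrow> nat" where
  "y_count (FW l) = length (filter id l)"

fun word_eval :: "'r::monoid_mult \<Rightarrow> 'r \<Rightarrow> fword \<Rightarrow> 'r" where
  "word_eval sx sy (FW l) = prod_list (map (\<lambda>b. if b then sy else sx) l)"

definition subst_free :: "'a::field freealg \<Rightarrow> 'a freealg \<Rightarrow> 'a freealg \<Rightarrow> 'a freealg" where
  "subst_free sx sy = pm_eval kc (word_eval sx sy)"

lemma kalg_endo_subst_free: "kalg_endo (subst_free sx sy)"
  unfolding subst_free_def
proof (rule kalg_endo_pm_eval_kc)
  show "word_eval sx sy (\<mu> + \<nu>) = word_eval sx sy \<mu> * word_eval sx sy \<nu>" for \<mu> \<nu>
    by (cases \<mu>; cases \<nu>) simp
qed (simp add: zero_fword_def)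

lemma freealg_generated:
  fixes P :: "'a::field freealg \<Rightarrow> bool"
  assumes kc: "\<And>c. P (kc c)" and X: "P X_free" and Y: "P Y_free"
    and add: "\<And>a b. P a \<Longrightarrow> P b \<Longrightarrow> P (a + b)" and mult: "\<And>a b. P a \<Longrightarrow> P b \<Longrightarrow> P (a * b)"
  shows "P g"
proof (rule poly_mapping_induct_single[where P = P, OF _ add])
  have word: "P (Poly_Mapping.single (FW l) 1)" for l
  proof (induction l)
    case Nil
    then show ?case
      using kc[of 1] by (simp add: kc_def zero_fword_def)
  next
    case (Cons b l)
    have "P (Poly_Mapping.single (FW [b]) (1::'a))"
      using X Y by (cases b) (simp_all add: X_free_def Y_free_def)
    moreover have "Poly_Mapping.single (FW (b # l)) (1::'a) =
        Poly_Mapping.single (FW [b]) 1 * Poly_Mapping.single (FW l) 1"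
      by (simp add: mult_single)
    ultimately show ?case
      using mult Cons.IH by simp
  qed
  fix \<mu> and c :: 'a
  obtain l where "\<mu> = FW l"
    by (cases \<mu>)
  moreover have "Poly_Mapping.single (FW l) c = kc c * Poly_Mapping.single (FW l) (1::'a)"
    by (simp add: kc_def mult_single zero_fword_def)
  ultimately show "P (Poly_Mapping.single \<mu> c)"
    using mult kc word by simp
qed

interpretation free: two_generator_algebra X_free Y_free "FW [False]" "FW [True]" x_count y_count subst_free
proof
  show "\<And>\<mu> \<nu>. x_count (\<mu> + \<nu>) = x_count \<mu> + x_count \<nu>" "\<And>\<mu> \<nu>. y_count (\<mu> + \<nu>) = y_count \<mu> + y_count \<nu>"
    by (case_tac \<mu>; case_tac \<nu>; simp)+
  show "\<And>sx sy. subst_free sx sy X_free = sx" "\<And>sx sy. subst_free sx sy Y_free = sy"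
    by (simp_all add: subst_free_def X_free_def Y_free_def pm_eval_single)
  show "\<And>P g. (\<And>c. P (kc c)) \<Longrightarrow> P X_free \<Longrightarrow> P Y_free \<Longrightarrow> (\<And>a b. P a \<Longrightarrow> P b \<Longrightarrow> P (a + b))
      \<Longrightarrow> (\<And>a b. P a \<Longrightarrow> P b \<Longrightarrow> P (a * b)) \<Longrightarrow> P g"
    by (rule freealg_generated)
qed (simp_all add: X_free_def Y_free_def kalg_endo_subst_free)

section \<open>The commutative algebra \<open>K[x,y]\<close>\<close>

definition monomial_eval :: "'r::comm_monoid_mult \<Rightarrow> 'r \<Rightarrow> (bool \<Rightarrow>\<^sub>0 nat) \<Rightarrow> 'r" where
  "monomial_eval sx sy \<mu> = sx ^ Poly_Mapping.lookup \<mu> False * sy ^ Poly_Mapping.lookup \<mu> True"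

definition subst_comm :: "'a::field polyalg \<Rightarrow> 'a polyalg \<Rightarrow> 'a polyalg \<Rightarrow> 'a polyalg" where
  "subst_comm sx sy = pm_eval kc (monomial_eval sx sy)"

lemma kalg_endo_subst_comm: "kalg_endo (subst_comm sx sy)"
  unfolding subst_comm_def
  by (rule kalg_endo_pm_eval_kc) (simp_all add: monomial_eval_def lookup_add power_add algebra_simps)

lemma polyalg_generated:
  fixes P :: "'a::field polyalg \<Rightarrow> bool"
  assumes kc: "\<And>c. P (kc c)" and X: "P X_comm" and Y: "P Y_comm"
    and add: "\<And>a b. P a \<Longrightarrow> P b \<Longrightarrow> P (a + b)" and mult: "\<And>a b. P a \<Longrightarrow> P b \<Longrightarrow> P (a * b)"
  shows "P g"
proof (rule poly_mapping_induct_single[where P = P, OF _ add])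
  have power: "P (q ^ n)" if "P q" for q n
    by (induction n) (use kc[of 1] mult that in simp_all)
  have X_power: "X_comm ^ n = Poly_Mapping.single (Poly_Mapping.single False n) (1::'a)" for n
    by (induction n) (simp_all add: X_comm_def mult_single flip: single_add)
  have Y_power: "Y_comm ^ n = Poly_Mapping.single (Poly_Mapping.single True n) (1::'a)" for n
    by (induction n) (simp_all add: Y_comm_def mult_single flip: single_add)
  fix \<mu> :: "bool \<Rightarrow>\<^sub>0 nat" and c :: 'a
  have \<mu>: "\<mu> = Poly_Mapping.single False (Poly_Mapping.lookup \<mu> False)
      + Poly_Mapping.single True (Poly_Mapping.lookup \<mu> True)"
    by (rule poly_mapping_eqI) (auto simp: lookup_add lookup_single when_def)
  have "Poly_Mapping.single \<mu> c =
      kc c * (X_comm ^ Poly_Mapping.lookup \<mu> False * Y_comm ^ Poly_Mapping.lookup \<mu> True)"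
    by (subst \<mu>) (simp add: X_power Y_power kc_def mult_single)
  then show "P (Poly_Mapping.single \<mu> c)"
    using mult kc power X Y by simp
qed

interpretation comm: two_generator_algebra X_comm Y_comm
  "Poly_Mapping.single False 1" "Poly_Mapping.single True 1"
  "\<lambda>\<mu>. Poly_Mapping.lookup \<mu> False" "\<lambda>\<mu>. Poly_Mapping.lookup \<mu> True" subst_comm
proof
  show "\<And>sx sy. subst_comm sx sy X_comm = sx" "\<And>sx sy. subst_comm sx sy Y_comm = sy"
    by (simp_all add: subst_comm_def X_comm_def Y_comm_def pm_eval_single monomial_eval_def lookup_single)
  show "\<And>P g. (\<And>c. P (kc c)) \<Longrightarrow> P X_comm \<Longrightarrow> P Y_comm \<Longrightarrow> (\<And>a b. P a \<Longrightarrow> P b \<Longrightarrow> P (a + b))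
      \<Longrightarrow> (\<And>a b. P a \<Longrightarrow> P b \<Longrightarrow> P (a * b)) \<Longrightarrow> P g"
    by (rule polyalg_generated)
qed (simp_all add: X_comm_def Y_comm_def lookup_add lookup_single kalg_endo_subst_comm)

theorem lemma2p10:
  shows "orbit_claim (X_free :: 'a::field_char_0 freealg) Y_free
       \<and> orbit_claim (X_comm :: 'a polyalg) Y_comm"
  using free.orbit_claim comm.orbit_claim by simp

end
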